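(* Let $\mathcal E_i\equiv1\to H_i\xrightarrow{\alpha_i}G_i\xrightarrow{\beta_i}K_i\to1$ ($i=1,2$) be central extensions of multiplicative Lie algebras and $(\lambda,\mu,\nu)$ an isoclinic morphism from $\mathcal E_1$ to $\mathcal E_2$. Then $\ker\mu\cap{}^M[G_1,G_1]=1$ and $\mu(G_1)\,\alpha_2(H_2)=G_2$.
   Context: A multiplicative Lie algebra is a group $(G,\cdot)$ with a binary operation $\star$ such that for all $x,y,z\in G$: $x\star x=1$; $x\star(yz)=(x\star y)\,{}^y(x\star z)$; $(xy)\star z={}^x(y\star z)(x\star z)$; $((x\star y)\star{}^yz)((y\star z)\star{}^zx)((z\star x)\star{}^xy)=1$; ${}^z(x\star y)={}^zx\star{}^zy$, where ${}^xy=xyx^{-1}$. Homomorphisms preserve both operations. $Z(G)$ is the group center, $LZ(G)=\{x: x\star y=1\ \forall y\}$, $\mathcal Z(G)=LZ(G)\cap Z(G)$; $[x,y]$ is the group commutator; ${}^M[G,G]=(G\star G)[G,G]$ with $G\star G$ the ideal generated by all $a\star b$. A central extension is a short exact sequence $1\to H\xrightarrow{\alpha}G\xrightarrow{\beta}K\to1$ of multiplicative Lie algebras with $\alpha(H)\subseteq\mathcal Z(G)$. A morphism $(\lambda,\mu,\nu)$ from $\mathcal E_1$ to $\mathcal E_2$ consists of homomorphisms $\lambda:H_1\to H_2$, $\mu:G_1\to G_2$, $\nu:K_1\to K_2$ with $\mu\alpha_1=\alpha_2\lambda$, $\beta_2\mu=\nu\beta_1$. It is an isoclinic morphism if $\nu$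 and $\mu|_{{}^M[G_1,G_1]}:{}^M[G_1,G_1]\to{}^M[G_2,G_2]$ are isomorphisms such that $\mu([g,g'])=[h,h']$ and $\mu(g\star g')=h\star h'$ whenever $g,g'\in G_1$, $h,h'\in G_2$ with $\beta_2(h)=\nu\beta_1(g)$, $\beta_2(h')=\nu\beta_1(g')$. *)

theory Defs
  imports "HOL-Algebra.Algebra"
begin

record 'a mla = "'a monoid" + star :: "'a \<Rightarrow> 'a \<Rightarrow> 'a"

definition conjg :: "('a, 'b) monoid_scheme \<Rightarrow> 'a \<Rightarrow> 'a \<Rightarrow> 'a" where
  "conjg G x y = x \<otimes>\<^bsub>G\<^esub> y \<otimes>\<^bsub>G\<^esub> inv\<^bsub>G\<^esub> x"

definition mult_lie_alg :: "('a, 'b) mla_scheme \<Rightarrow> bool" where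
  "mult_lie_alg G \<longleftrightarrow> group G \<and>
    (\<forall>x\<in>carrier G. \<forall>y\<in>carrier G. star G x y \<in> carrier G) \<and>
    (\<forall>x\<in>carrier G. star G x x = \<one>\<^bsub>G\<^esub>) \<and>
    (\<forall>x\<in>carrier G. \<forall>y\<in>carrier G. \<forall>z\<in>carrier G.
        star G x (y \<otimes>\<^bsub>G\<^esub> z) = star G x y \<otimes>\<^bsub>G\<^esub> conjg G y (star G x z)) \<and>
    (\<forall>x\<in>carrier G. \<forall>y\<in>carrier G. \<forall>z\<in>carrier G.
        star G (x \<otimes>\<^bsub>G\<^esub> y) z = conjg G x (star G y z) \<otimes>\<^bsub>G\<^esub> star G x z) \<and>
    (\<forall>x\<in>carrier G. \<forall>y\<in>carrier G. \<forall>z\<in>carrier G.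
        star G (star G x y) (conjg G y z) \<otimes>\<^bsub>G\<^esub> star G (star G y z) (conjg G z x)
          \<otimes>\<^bsub>G\<^esub> star G (star G z x) (conjg G x y) = \<one>\<^bsub>G\<^esub>) \<and>
    (\<forall>x\<in>carrier G. \<forall>y\<in>carrier G. \<forall>z\<in>carrier G.
        conjg G z (star G x y) = star G (conjg G z x) (conjg G z y))"

definition mla_hom :: "('a, 'c) mla_scheme \<Rightarrow> ('b, 'd) mla_scheme \<Rightarrow> ('a \<Rightarrow> 'b) set" where
  "mla_hom G H = {f. f \<in> hom G H \<and>
     (\<forall>x\<in>carrier G. \<forall>y\<in>carrier G. f (star G x y) = star H (f x) (f y))}"

definition gcomm :: "('a, 'b) monoid_scheme \<Rightarrow> 'a \<Rightarrow> 'a \<Rightarrow> 'a" where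
  "gcomm G x y = x \<otimes>\<^bsub>G\<^esub> y \<otimes>\<^bsub>G\<^esub> inv\<^bsub>G\<^esub> x \<otimes>\<^bsub>G\<^esub> inv\<^bsub>G\<^esub> y"

definition group_center :: "('a, 'b) monoid_scheme \<Rightarrow> 'a set" where
  "group_center G = {x \<in> carrier G. \<forall>y\<in>carrier G. x \<otimes>\<^bsub>G\<^esub> y = y \<otimes>\<^bsub>G\<^esub> x}"

definition lie_center :: "('a, 'b) mla_scheme \<Rightarrow> 'a set" where
  "lie_center G = {x \<in> carrier G. \<forall>y\<in>carrier G. star G x y = \<one>\<^bsub>G\<^esub>}"

definition mla_center :: "('a, 'b) mla_scheme \<Rightarrow> 'a set" where
  "mla_center G = lie_center G \<inter> group_center G"

definition mla_ideal :: "'a set \<Rightarrow> ('a, 'b) mla_scheme \<Rightarrow> bool" where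
  "mla_ideal I G \<longleftrightarrow> I \<lhd> G \<and> (\<forall>g\<in>carrier G. \<forall>i\<in>I. star G g i \<in> I)"

definition star_ideal :: "('a, 'b) mla_scheme \<Rightarrow> 'a set" where
  "star_ideal G = \<Inter>{I. mla_ideal I G \<and>
      {star G a b | a b. a \<in> carrier G \<and> b \<in> carrier G} \<subseteq> I}"

definition comm_subgroup :: "('a, 'b) monoid_scheme \<Rightarrow> 'a set" where
  "comm_subgroup G = derived G (carrier G)"

definition Mcomm :: "('a, 'b) mla_scheme \<Rightarrow> 'a set" where
  "Mcomm G = star_ideal G <#>\<^bsub>G\<^esub> comm_subgroup G"

definition central_extension ::
  "('h, 'x) mla_scheme \<Rightarrow> ('g, 'y) mla_scheme \<Rightarrow> ('k, 'z) mla_scheme \<Rightarrow>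
   ('h \<Rightarrow> 'g) \<Rightarrow> ('g \<Rightarrow> 'k) \<Rightarrow> bool" where
  "central_extension H G K \<alpha> \<beta> \<longleftrightarrow>
     mult_lie_alg H \<and> mult_lie_alg G \<and> mult_lie_alg K \<and>
     \<alpha> \<in> mla_hom H G \<and> \<beta> \<in> mla_hom G K \<and>
     inj_on \<alpha> (carrier H) \<and> \<beta> ` carrier G = carrier K \<and>
     \<alpha> ` carrier H = kernel G K \<beta> \<and>
     \<alpha> ` carrier H \<subseteq> mla_center G"

definition ext_morphism ::
  "('h1, 'x1) mla_scheme \<Rightarrow> ('g1, 'y1) mla_scheme \<Rightarrow> ('k1, 'z1) mla_scheme \<Rightarrow>
   ('h1 \<Rightarrow> 'g1) \<Rightarrow> ('g1 \<Rightarrow> 'k1) \<Rightarrow>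
   ('h2, 'x2) mla_scheme \<Rightarrow> ('g2, 'y2) mla_scheme \<Rightarrow> ('k2, 'z2) mla_scheme \<Rightarrow>
   ('h2 \<Rightarrow> 'g2) \<Rightarrow> ('g2 \<Rightarrow> 'k2) \<Rightarrow>
   ('h1 \<Rightarrow> 'h2) \<Rightarrow> ('g1 \<Rightarrow> 'g2) \<Rightarrow> ('k1 \<Rightarrow> 'k2) \<Rightarrow> bool" where
  "ext_morphism H1 G1 K1 \<alpha>1 \<beta>1 H2 G2 K2 \<alpha>2 \<beta>2 lam \<mu> \<nu> \<longleftrightarrow>
     lam \<in> mla_hom H1 H2 \<and> \<mu> \<in> mla_hom G1 G2 \<and> \<nu> \<in> mla_hom K1 K2 \<and>
     (\<forall>h\<in>carrier H1. \<mu> (\<alpha>1 h) = \<alpha>2 (lam h)) \<and>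
     (\<forall>g\<in>carrier G1. \<beta>2 (\<mu> g) = \<nu> (\<beta>1 g))"

definition isoclinic_morphism ::
  "('h1, 'x1) mla_scheme \<Rightarrow> ('g1, 'y1) mla_scheme \<Rightarrow> ('k1, 'z1) mla_scheme \<Rightarrow>
   ('h1 \<Rightarrow> 'g1) \<Rightarrow> ('g1 \<Rightarrow> 'k1) \<Rightarrow>
   ('h2, 'x2) mla_scheme \<Rightarrow> ('g2, 'y2) mla_scheme \<Rightarrow> ('k2, 'z2) mla_scheme \<Rightarrow>
   ('h2 \<Rightarrow> 'g2) \<Rightarrow> ('g2 \<Rightarrow> 'k2) \<Rightarrow>
   ('h1 \<Rightarrow> 'h2) \<Rightarrow> ('g1 \<Rightarrow> 'g2) \<Rightarrow> ('k1 \<Rightarrow> 'k2) \<Rightarrow> bool" where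
  "isoclinic_morphism H1 G1 K1 \<alpha>1 \<beta>1 H2 G2 K2 \<alpha>2 \<beta>2 lam \<mu> \<nu> \<longleftrightarrow>
     ext_morphism H1 G1 K1 \<alpha>1 \<beta>1 H2 G2 K2 \<alpha>2 \<beta>2 lam \<mu> \<nu> \<and>
     bij_betw \<nu> (carrier K1) (carrier K2) \<and>
     bij_betw \<mu> (Mcomm G1) (Mcomm G2) \<and>
     (\<forall>g\<in>carrier G1. \<forall>g'\<in>carrier G1. \<forall>h\<in>carrier G2. \<forall>h'\<in>carrier G2.
        \<beta>2 h = \<nu> (\<beta>1 g) \<longrightarrow> \<beta>2 h' = \<nu> (\<beta>1 g') \<longrightarrow>
        \<mu> (gcomm G1 g g') = gcomm G2 h h' \<and> \<mu> (star G1 g g') = star G2 h h')"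

end

theory Submission
  imports Defs
begin

(* Only the group-theoretic part of the isoclinism data is needed: \<mu> is injective on
   Mcomm G1, which contains the identity, and \<beta>2 \<circ> \<mu> = \<nu> \<circ> \<beta>1 is onto K2, so every
   element of G2 lies in the coset of some \<mu> g modulo ker \<beta>2 = \<alpha>2(H2). *)

lemma (in group_hom) kernel_Int_eq_one_if_inj_on:
  assumes "inj_on h S" and "\<one> \<in> S"
  shows "kernel G H h \<inter> S = {\<one>}"
  using assms hom_one by (auto simp: kernel_def dest: inj_onD[of h S _ \<one>])

lemma one_mem_star_ideal:
  assumes "group G"
  shows "\<one>\<^bsub>G\<^esub> \<in> star_ideal G"
  unfolding star_ideal_def mla_ideal_def
  by (auto intro: subgroup.one_closed normal_imp_subgroup)

lemma one_mem_comm_subgroup: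
  assumes "group G"
  shows "\<one>\<^bsub>G\<^esub> \<in> comm_subgroup G"
  unfolding comm_subgroup_def
  using group.derived_is_subgroup[OF assms] subgroup.one_closed by blast

lemma one_mem_Mcomm:
  assumes "group G"
  shows "\<one>\<^bsub>G\<^esub> \<in> Mcomm G"
proof -
  have "\<one>\<^bsub>G\<^esub> = \<one>\<^bsub>G\<^esub> \<otimes>\<^bsub>G\<^esub> \<one>\<^bsub>G\<^esub>"
    using assms by (simp add: group.is_monoid)
  then show ?thesis
    unfolding Mcomm_def set_mult_def
    using one_mem_star_ideal[OF assms] one_mem_comm_subgroup[OF assms] by blast
qed

lemma central_extension_group_hom:
  assumes "central_extension H G K \<alpha> \<beta>"
  shows "group_hom G K \<beta>"
  using assms
  by (simp add: central_extension_def mult_lie_alg_def mla_hom_def group_hom_def group_hom_axioms_def)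

lemma isoclinic_morphism_group_hom:
  assumes "central_extension H1 G1 K1 \<alpha>1 \<beta>1"
    and "central_extension H2 G2 K2 \<alpha>2 \<beta>2"
    and "isoclinic_morphism H1 G1 K1 \<alpha>1 \<beta>1 H2 G2 K2 \<alpha>2 \<beta>2 lam \<mu> \<nu>"
  shows "group_hom G1 G2 \<mu>"
  using assms
  by (simp add: central_extension_def mult_lie_alg_def isoclinic_morphism_def ext_morphism_def
      mla_hom_def group_hom_def group_hom_axioms_def)

lemma isoclinic_morphism_comp_surj:
  assumes "central_extension H1 G1 K1 \<alpha>1 \<beta>1"
    and "isoclinic_morphism H1 G1 K1 \<alpha>1 \<beta>1 H2 G2 K2 \<alpha>2 \<beta>2 lam \<mu> \<nu>"
  shows "(\<beta>2 \<circ> \<mu>) ` carrier G1 = carrier K2"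
proof -
  have "(\<beta>2 \<circ> \<mu>) ` carrier G1 = \<nu> ` \<beta>1 ` carrier G1"
    using assms(2) by (force simp: isoclinic_morphism_def ext_morphism_def)
  also have "\<dots> = carrier K2"
    using assms by (simp add: central_extension_def isoclinic_morphism_def bij_betw_def)
  finally show ?thesis .
qed

theorem corollary4p6:
  fixes H1 :: "('h1, 'x1) mla_scheme" and G1 :: "('g1, 'y1) mla_scheme"
    and K1 :: "('k1, 'z1) mla_scheme"
    and H2 :: "('h2, 'x2) mla_scheme" and G2 :: "('g2, 'y2) mla_scheme"
    and K2 :: "('k2, 'z2) mla_scheme"
  assumes "central_extension H1 G1 K1 \<alpha>1 \<beta>1"
    and "central_extension H2 G2 K2 \<alpha>2 \<beta>2"
    and "isoclinic_morphism H1 G1 K1 \<alpha>1 \<beta>1 H2 G2 K2 \<alpha>2 \<beta>2 lam \<mu> \<nu>"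
  shows "kernel G1 G2 \<mu> \<inter> Mcomm G1 = {\<one>\<^bsub>G1\<^esub>} \<and>
         (\<mu> ` carrier G1) <#>\<^bsub>G2\<^esub> (\<alpha>2 ` carrier H2) = carrier G2"
proof
  interpret \<mu>: group_hom G1 G2 \<mu>
    using isoclinic_morphism_group_hom[OF assms] .
  interpret \<beta>2: group_hom G2 K2 \<beta>2
    using central_extension_group_hom[OF assms(2)] .
  show "kernel G1 G2 \<mu> \<inter> Mcomm G1 = {\<one>\<^bsub>G1\<^esub>}"
    using assms(3) \<mu>.kernel_Int_eq_one_if_inj_on one_mem_Mcomm[OF \<mu>.G.is_group]
    by (simp add: isoclinic_morphism_def bij_betw_def)
  have "\<alpha>2 ` carrier H2 = kernel G2 K2 \<beta>2"
    using assms(2) by (simp add: central_extension_def)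
  then show "(\<mu> ` carrier G1) <#>\<^bsub>G2\<^esub> (\<alpha>2 ` carrier H2) = carrier G2"
    using group_sum_image_ker[OF \<mu>.homh \<beta>2.homh isoclinic_morphism_comp_surj[OF assms(1,3)]]
      \<mu>.G.is_group \<mu>.H.is_group \<beta>2.H.is_group
    by simp
qed

end
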